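(* Let $X$ be a topological space, $(Y,d)$ a metric space and $f:X\to Y$ a mapping. Assume that for some integer $n\ge 2$ there are strictly functionally discrete families $\mathcal F_0,\mathcal F_1,\dots,\mathcal F_n$ of subsets of $X$ and mappings $p_k:\mathcal F_k\to Y$, $k\in\{0,\dots,n\}$, such that: (A) $\mathcal F_0$ consists of the single set $X$; (B) for every $k\le n$ and $F\in\mathcal F_k$, $\sup_{x\in F} d(f(x),p_k(F))<\frac{1}{2^{k+2}}$; (C) for every $k<n$ each set of $\mathcal F_{k+1}$ is contained in some set of $\mathcal F_k$; (D) for every $F\in\mathcal F_1$ the points $p_0(X)$ and $p_1(F)$ can be joined by an arc in $Y$; (E) for every $k\in\{1,\dots,n-1\}$ and all $F\in\mathcal F_{k+1}$, $F'\in\mathcal F_k$ with $F\subseteq F'$, the points $p_{k+1}(F)$ and $p_k(F')$ can be joined by an arc of diameter $<\frac{1}{2^{k+2}}$ in $Y$. Then there exists a continuous mapping $g:X\to Y$ such that $d(f(x),g(x))<\frac{1}{2^k}$ for every $k\in\{1,\dots,n\}$ and every $x\in\bigcup\mathcal F_k$.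
   Context: A family $\mathcal A$ of subsets of $X$ is strictly functionally discrete if for every $A\in\mathcal A$ there is a continuous $f_A:X\to[0,1]$ with $A\subseteq f_A^{-1}(0)$ such that the family $(f_A^{-1}([0,1)):A\in\mathcal A)$ is discrete (every point of $X$ has a neighborhood meeting at most one member). $\bigcup\mathcal F_k$ denotes the union of all members of $\mathcal F_k$. Points $a,b$ are joined by an arc in $Y$ if there is a continuous $\gamma:[0,1]\to Y$ with $\gamma(0)=a$, $\gamma(1)=b$; its diameter is that of $\gamma([0,1])$. *)

theory Defs
  imports "HOL-Analysis.Analysis"
begin

text \<open>Strictly functionally discrete family of subsets of a topological space (the space is
the type 'a, i.e. X = UNIV).\<close>
definition strictly_functionally_discrete :: "'a::topological_space set set \<Rightarrow> bool" where
  "strictly_functionally_discrete \<A> \<longleftrightarrow>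
     (\<exists>\<phi> :: 'a set \<Rightarrow> 'a \<Rightarrow> real.
        (\<forall>A\<in>\<A>. continuous_on UNIV (\<phi> A) \<and> (\<forall>x. \<phi> A x \<in> {0..1}) \<and> A \<subseteq> \<phi> A -` {0}) \<and>
        (\<forall>x. \<exists>U. open U \<and> x \<in> U \<and>
           (\<forall>A\<in>\<A>. \<forall>B\<in>\<A>. U \<inter> \<phi> A -` {0..<1} \<noteq> {} \<longrightarrow> U \<inter> \<phi> B -` {0..<1} \<noteq> {} \<longrightarrow> A = B)))"

definition joined_by_arc :: "'b::topological_space \<Rightarrow> 'b \<Rightarrow> bool" where
  "joined_by_arc a b \<longleftrightarrow> (\<exists>\<gamma>. path \<gamma> \<and> pathstart \<gamma> = a \<and> pathfinish \<gamma> = b)"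

definition joined_by_arc_diam_lt :: "'b::metric_space \<Rightarrow> 'b \<Rightarrow> real \<Rightarrow> bool" where
  "joined_by_arc_diam_lt a b r \<longleftrightarrow>
     (\<exists>\<gamma>. path \<gamma> \<and> pathstart \<gamma> = a \<and> pathfinish \<gamma> = b \<and> diameter (path_image \<gamma>) < r)"

end

theory Submission
  imports Defs
begin

text \<open>The approximation g is built in n stages. Stage k is glued along the discrete family
  of open sets {psi k S < 1}, S in F k, where the cut-off functions psi k S vanish on S and are
  chosen so that psi k S < 1 forces psi (k - 1) < 1/2 on the parent of S. Where psi k S <= 1/2,
  stage k equals p k S; as psi k S rises to 1 it runs back along the arc to p (k - 1) of the
  parent, where stage k - 1 already sits. Gluing along a discrete family preserves continuity,
  consecutive stages differ by at most 2^-(k+2) for k >= 1, and the geometric tail gives the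
  bound on F k.\<close>

definition discrete_family :: "'i set \<Rightarrow> ('i \<Rightarrow> 'a::topological_space set) \<Rightarrow> bool" where
  "discrete_family I V \<longleftrightarrow>
     (\<forall>x. \<exists>U. open U \<and> x \<in> U \<and> (\<forall>i\<in>I. \<forall>j\<in>I. U \<inter> V i \<noteq> {} \<longrightarrow> U \<inter> V j \<noteq> {} \<longrightarrow> i = j))"

lemma discrete_familyE:
  assumes "discrete_family I V"
  obtains U where "open U" "x \<in> U"
    "\<And>i j. i \<in> I \<Longrightarrow> j \<in> I \<Longrightarrow> U \<inter> V i \<noteq> {} \<Longrightarrow> U \<inter> V j \<noteq> {} \<Longrightarrow> i = j"
proof -
  obtain U where "open U" "x \<in> U" "\<forall>i\<in>I. \<forall>j\<in>I. U \<inter> V i \<noteq> {} \<longrightarrow> U \<inter> V j \<noteq> {} \<longrightarrow> i = j"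
    using assms unfolding discrete_family_def by (elim allE[of _ x] exE conjE)
  then show thesis using that by simp
qed

lemma discrete_family_mono:
  assumes "discrete_family I V" and "\<And>i. i \<in> I \<Longrightarrow> W i \<subseteq> V i"
  shows "discrete_family I W"
  unfolding discrete_family_def
proof
  fix x
  obtain U where "open U" "x \<in> U"
    and "\<And>i j. i \<in> I \<Longrightarrow> j \<in> I \<Longrightarrow> U \<inter> V i \<noteq> {} \<Longrightarrow> U \<inter> V j \<noteq> {} \<Longrightarrow> i = j"
    by (rule discrete_familyE[OF assms(1), of x]) blast
  moreover have "U \<inter> W i \<noteq> {} \<Longrightarrow> U \<inter> V i \<noteq> {}" if "i \<in> I" for i
    using assms(2)[OF that] by blast
  ultimately show "\<exists>U. open U \<and> x \<in> U \<and> (\<forall>i\<in>I. \<forall>j\<in>I. U \<inter> W i \<noteq> {} \<longrightarrow> U \<inter> W j \<noteq> {} \<longrightarrow> i = j)"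
    by (intro exI[of _ U]) auto
qed

lemma discrete_family_singleton: "discrete_family {i} V"
  unfolding discrete_family_def by blast

lemma discrete_family_unique:
  assumes "discrete_family I V" "i \<in> I" "j \<in> I" "x \<in> V i" "x \<in> V j"
  shows "i = j"
proof -
  obtain U where "x \<in> U"
    and U: "\<And>i j. i \<in> I \<Longrightarrow> j \<in> I \<Longrightarrow> U \<inter> V i \<noteq> {} \<Longrightarrow> U \<inter> V j \<noteq> {} \<Longrightarrow> i = j"
    by (rule discrete_familyE[OF assms(1), of x]) blast
  moreover have "U \<inter> V i \<noteq> {}" "U \<inter> V j \<noteq> {}"
    using \<open>x \<in> U\<close> assms(4,5) by blast+
  ultimately show ?thesis using assms(2,3) by blast
qed

definition glue :: "'i set \<Rightarrow> ('i \<Rightarrow> 'a set) \<Rightarrow> ('i \<Rightarrow> 'a \<Rightarrow> 'b) \<Rightarrow> ('a \<Rightarrow> 'b) \<Rightarrow> 'a \<Rightarrow> 'b" where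
  "glue I V h g x = (if \<exists>i\<in>I. x \<in> V i then h (SOME i. i \<in> I \<and> x \<in> V i) x else g x)"

lemma glue_eq:
  assumes "discrete_family I V" "i \<in> I" "x \<in> V i"
  shows "glue I V h g x = h i x"
proof -
  have "(SOME j. j \<in> I \<and> x \<in> V j) = i"
    using assms by (blast intro: some_equality discrete_family_unique)
  moreover have "\<exists>j\<in>I. x \<in> V j" using assms(2,3) by blast
  ultimately show ?thesis unfolding glue_def by simp
qed

lemma glue_eq_outside: "(\<And>i. i \<in> I \<Longrightarrow> x \<notin> V i) \<Longrightarrow> glue I V h g x = g x"
  unfolding glue_def by simp

lemma continuous_on_glue:
  assumes disc: "discrete_family I V" and g: "continuous_on UNIV g"
    and h: "\<And>i. i \<in> I \<Longrightarrow> continuous_on UNIV (\<lambda>x. if x \<in> V i then h i x else g x)"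
  shows "continuous_on UNIV (glue I V h g)"
proof -
  have "\<exists>U. open U \<and> x0 \<in> U \<and> continuous_on U (glue I V h g)" for x0
  proof -
    obtain U where U: "open U" "x0 \<in> U"
      and meets: "\<And>i j. i \<in> I \<Longrightarrow> j \<in> I \<Longrightarrow> U \<inter> V i \<noteq> {} \<Longrightarrow> U \<inter> V j \<noteq> {} \<Longrightarrow> i = j"
      by (rule discrete_familyE[OF disc, of x0]) blast
    have "continuous_on U (glue I V h g)"
    proof (cases "\<exists>i\<in>I. U \<inter> V i \<noteq> {}")
      case True
      then obtain i where i: "i \<in> I" "U \<inter> V i \<noteq> {}" by blast
      have "glue I V h g y = (if y \<in> V i then h i y else g y)" if "y \<in> U" for y
      proof (cases "y \<in> V i")
        case True
        then show ?thesis using glue_eq[OF disc i(1)] by simp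
      next
        case False
        have "y \<notin> V j" if "j \<in> I" for j
          using meets[OF i(1) that i(2)] \<open>y \<in> U\<close> False by blast
        then show ?thesis using False glue_eq_outside by metis
      qed
      then show ?thesis
        using continuous_on_subset[OF h[OF i(1)]] by (auto intro: continuous_on_eq)
    next
      case False
      then have "glue I V h g y = g y" if "y \<in> U" for y
        using that by (blast intro: glue_eq_outside)
      then show ?thesis
        using continuous_on_subset[OF g] by (auto intro: continuous_on_eq)
    qed
    with U show ?thesis by blast
  qed
  then have "\<Union>{U. open U \<and> continuous_on U (glue I V h g)} = UNIV" by blast
  moreover have "continuous_on (\<Union>{U. open U \<and> continuous_on U (glue I V h g)}) (glue I V h g)"
    by (rule continuous_on_open_Union) auto
  ultimately show ?thesis by simp
qed

lemma dist_le_geometric_tail: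
  fixes a :: "nat \<Rightarrow> 'a::metric_space"
  assumes "m \<le> n" and step: "\<And>j. m \<le> j \<Longrightarrow> j < n \<Longrightarrow> dist (a (Suc j)) (a j) \<le> c / 2 ^ j"
  shows "dist (a n) (a m) \<le> 2 * c / 2 ^ m - 2 * c / 2 ^ n"
  using assms(1)
proof (induction n rule: dec_induct)
  case base
  then show ?case by simp
next
  case (step j)
  have "dist (a (Suc j)) (a m) \<le> dist (a (Suc j)) (a j) + dist (a j) (a m)"
    by (rule dist_triangle)
  also have "\<dots> \<le> c / 2 ^ j + (2 * c / 2 ^ m - 2 * c / 2 ^ j)"
    using assms(2) step by (intro add_mono) auto
  also have "\<dots> = 2 * c / 2 ^ m - 2 * c / 2 ^ Suc j"
    by simp
  finally show ?case .
qed

lemma dist_le_diameter_path_image: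
  assumes "path \<gamma>" "s \<in> {0..1}" "t \<in> {0..1}"
  shows "dist (\<gamma> s) (\<gamma> t) \<le> diameter (path_image \<gamma>)"
  using assms by (intro diameter_bounded_bound compact_imp_bounded compact_path_image)
    (auto simp: path_image_def)

locale arc_approximation_scheme =
  fixes n :: nat
    and F :: "nat \<Rightarrow> 'a::topological_space set set"
    and p :: "nat \<Rightarrow> 'a set \<Rightarrow> 'b::metric_space"
    and \<phi> :: "nat \<Rightarrow> 'a set \<Rightarrow> 'a \<Rightarrow> real"
  assumes \<phi>_continuous: "k \<le> n \<Longrightarrow> A \<in> F k \<Longrightarrow> continuous_on UNIV (\<phi> k A)"
    and \<phi>_range: "k \<le> n \<Longrightarrow> A \<in> F k \<Longrightarrow> \<phi> k A x \<in> {0..1}"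
    and \<phi>_zero: "k \<le> n \<Longrightarrow> A \<in> F k \<Longrightarrow> x \<in> A \<Longrightarrow> \<phi> k A x = 0"
    and \<phi>_discrete: "k \<le> n \<Longrightarrow> discrete_family (F k) (\<lambda>A. \<phi> k A -` {0..<1})"
    and F_0: "F 0 = {UNIV}"
    and F_refines: "k < n \<Longrightarrow> S \<in> F (Suc k) \<Longrightarrow> \<exists>S'\<in>F k. S \<subseteq> S'"
    and first_arcs: "S \<in> F 1 \<Longrightarrow> joined_by_arc (p 0 UNIV) (p 1 S)"
    and short_arcs: "k \<in> {1..n-1} \<Longrightarrow> S \<in> F (Suc k) \<Longrightarrow> S' \<in> F k \<Longrightarrow> S \<subseteq> S' \<Longrightarrow>
              joined_by_arc_diam_lt (p (Suc k) S) (p k S') (1 / 2 ^ (k + 2))"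
begin

definition parent :: "nat \<Rightarrow> 'a set \<Rightarrow> 'a set" where
  "parent k S = (SOME S'. S' \<in> F k \<and> S \<subseteq> S')"

lemma parent: "k < n \<Longrightarrow> S \<in> F (Suc k) \<Longrightarrow> parent k S \<in> F k \<and> S \<subseteq> parent k S"
  unfolding parent_def by (rule someI_ex) (use F_refines in blast)

fun \<psi> :: "nat \<Rightarrow> 'a set \<Rightarrow> 'a \<Rightarrow> real" where
  "\<psi> 0 S x = 0"
| "\<psi> (Suc k) S x = max (\<phi> (Suc k) S x) (min 1 (2 * \<psi> k (parent k S) x))"

declare \<psi>.simps(2)[simp del]

lemma \<psi>_continuous: "k \<le> n \<Longrightarrow> S \<in> F k \<Longrightarrow> continuous_on UNIV (\<psi> k S)"
proof (induction k arbitrary: S)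
  case (Suc k)
  then have "continuous_on UNIV (\<psi> k (parent k S))" using parent by simp
  with Suc.prems show ?case
    unfolding \<psi>.simps by (auto intro!: continuous_intros \<phi>_continuous)
qed simp

lemma \<psi>_range: "k \<le> n \<Longrightarrow> S \<in> F k \<Longrightarrow> \<psi> k S x \<in> {0..1}"
proof (induction k arbitrary: S)
  case (Suc k)
  then have "0 \<le> \<psi> k (parent k S) x" using parent by fastforce
  with \<phi>_range[OF Suc.prems, of x] show ?case by (auto simp: \<psi>.simps max_def min_def)
qed simp

lemma \<psi>_zero: "k \<le> n \<Longrightarrow> S \<in> F k \<Longrightarrow> x \<in> S \<Longrightarrow> \<psi> k S x = 0"
proof (induction k arbitrary: S)
  case (Suc k)
  have "parent k S \<in> F k" "x \<in> parent k S"
    using parent[of k S] Suc.prems by auto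
  then have "\<psi> k (parent k S) x = 0"
    using Suc.IH Suc.prems(1) by simp
  moreover have "\<phi> (Suc k) S x = 0"
    using \<phi>_zero Suc.prems by blast
  ultimately show ?case by (simp add: \<psi>.simps)
qed simp

lemma \<psi>_parent_le_half: "\<psi> (Suc k) S x < 1 \<Longrightarrow> \<psi> k (parent k S) x \<le> 1 / 2"
  by (simp add: \<psi>.simps min_def split: if_splits)

lemma \<psi>_discrete:
  assumes "k \<le> n"
  shows "discrete_family (F k) (\<lambda>S. {x. \<psi> k S x < 1})"
proof (cases k)
  case 0
  then show ?thesis by (simp add: F_0 discrete_family_singleton)
next
  case (Suc j)
  have "{x. \<psi> k S x < 1} \<subseteq> \<phi> k S -` {0..<1}" if "S \<in> F k" for S
  proof
    fix x assume "x \<in> {x. \<psi> k S x < 1}"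
    moreover have "\<phi> k S x \<le> \<psi> k S x" using Suc by (simp add: \<psi>.simps)
    moreover have "0 \<le> \<phi> k S x" using \<phi>_range[OF assms that] by simp
    ultimately show "x \<in> \<phi> k S -` {0..<1}" by simp
  qed
  then show ?thesis by (intro discrete_family_mono[OF \<phi>_discrete[OF assms]])
qed

definition link :: "nat \<Rightarrow> 'a set \<Rightarrow> real \<Rightarrow> 'b" where
  "link k S = (SOME \<gamma>. path \<gamma> \<and> pathstart \<gamma> = p k (parent k S) \<and> pathfinish \<gamma> = p (Suc k) S \<and>
      (1 \<le> k \<longrightarrow> diameter (path_image \<gamma>) < 1 / 2 ^ (k + 2)))"

lemma link:
  assumes "k < n" "S \<in> F (Suc k)"
  shows "path (link k S) \<and> pathstart (link k S) = p k (parent k S) \<and>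
    pathfinish (link k S) = p (Suc k) S \<and> (1 \<le> k \<longrightarrow> diameter (path_image (link k S)) < 1 / 2 ^ (k + 2))"
proof -
  have "\<exists>\<gamma>. path \<gamma> \<and> pathstart \<gamma> = p k (parent k S) \<and> pathfinish \<gamma> = p (Suc k) S \<and>
      (1 \<le> k \<longrightarrow> diameter (path_image \<gamma>) < 1 / 2 ^ (k + 2))"
  proof (cases "k = 0")
    case True
    then have "parent k S = UNIV" using parent[OF assms] F_0 by simp
    then show ?thesis
      using first_arcs assms True unfolding joined_by_arc_def by auto
  next
    case False
    then have "joined_by_arc_diam_lt (p (Suc k) S) (p k (parent k S)) (1 / 2 ^ (k + 2))"
      using short_arcs assms parent[OF assms] by simp
    then obtain \<gamma> where "path \<gamma>" "pathstart \<gamma> = p (Suc k) S" "pathfinish \<gamma> = p k (parent k S)"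
      "diameter (path_image \<gamma>) < 1 / 2 ^ (k + 2)"
      unfolding joined_by_arc_diam_lt_def by blast
    then show ?thesis by (intro exI[of _ "reversepath \<gamma>"]) simp
  qed
  then show ?thesis unfolding link_def by (rule someI_ex)
qed

fun approx :: "nat \<Rightarrow> 'a \<Rightarrow> 'b" where
  "approx 0 = (\<lambda>x. p 0 UNIV)"
| "approx (Suc k) = glue (F (Suc k)) (\<lambda>S. {x. \<psi> (Suc k) S x < 1})
     (\<lambda>S x. link k S (min 1 (2 - 2 * \<psi> (Suc k) S x))) (approx k)"

declare approx.simps(2)[simp del]

lemma approx_eq_centre:
  assumes "k \<le> n" "S \<in> F k" "\<psi> k S x \<le> 1 / 2"
  shows "approx k x = p k S"
proof (cases k)
  case 0
  then show ?thesis using assms(2) F_0 by simp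
next
  case (Suc j)
  have "approx k x = link j S (min 1 (2 - 2 * \<psi> k S x))"
    unfolding Suc approx.simps using \<psi>_discrete assms Suc by (intro glue_eq) auto
  also have "\<dots> = link j S 1"
    using assms(3) by simp
  also have "\<dots> = p k S"
    using link[of j S] assms Suc by (simp add: pathfinish_def)
  finally show ?thesis .
qed

lemma approx_eq_member: "k \<le> n \<Longrightarrow> S \<in> F k \<Longrightarrow> x \<in> S \<Longrightarrow> approx k x = p k S"
  by (simp add: approx_eq_centre \<psi>_zero)

lemma approx_continuous_piece:
  assumes "k < n" "S \<in> F (Suc k)" and approx_k: "continuous_on UNIV (approx k)"
  shows "continuous_on UNIV (\<lambda>x. if x \<in> {y. \<psi> (Suc k) S y < 1}
           then link k S (min 1 (2 - 2 * \<psi> (Suc k) S x)) else approx k x)"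
proof -
  let ?\<psi> = "\<psi> (Suc k) S" and ?\<psi>' = "\<psi> k (parent k S)"
  have "Suc k \<le> n" "k \<le> n" "parent k S \<in> F k"
    using assms(1) parent[OF assms(1,2)] by auto
  then have \<psi>: "continuous_on UNIV ?\<psi>" "\<And>x. ?\<psi> x \<in> {0..1}" and \<psi>': "continuous_on UNIV ?\<psi>'"
    using assms(2) \<psi>_continuous \<psi>_range by blast+
  have \<gamma>: "path (link k S)" "link k S 0 = p k (parent k S)"
    using link[OF assms(1,2)] by (auto simp: pathstart_def)
  have "continuous_on ({x. ?\<psi>' x \<le> 1 / 2} \<union> {x. 1 \<le> ?\<psi> x})
      (\<lambda>x. if ?\<psi> x < 1 then link k S (min 1 (2 - 2 * ?\<psi> x)) else approx k x)"
  proof (rule continuous_on_cases)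
    show "closed {x. ?\<psi>' x \<le> 1 / 2}" "closed {x. 1 \<le> ?\<psi> x}"
      using \<psi>(1) \<psi>' by (auto intro!: closed_Collect_le continuous_intros)
    show "continuous_on {x. 1 \<le> ?\<psi> x} (approx k)"
      using approx_k by (rule continuous_on_subset) simp
    have "continuous_on UNIV (\<lambda>x. min 1 (2 - 2 * ?\<psi> x))"
      using \<psi>(1) by (intro continuous_intros)
    moreover have "(\<lambda>x. min 1 (2 - 2 * ?\<psi> x)) ` UNIV \<subseteq> {0..1}"
      using \<psi>(2) by (auto simp: min_def)
    ultimately have "continuous_on UNIV (\<lambda>x. link k S (min 1 (2 - 2 * ?\<psi> x)))"
      using \<gamma>(1) unfolding path_def by (rule continuous_on_compose2[rotated])
    then show "continuous_on {x. ?\<psi>' x \<le> 1 / 2} (\<lambda>x. link k S (min 1 (2 - 2 * ?\<psi> x)))"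
      by (rule continuous_on_subset) simp
    show "\<forall>x. x \<in> {x. ?\<psi>' x \<le> 1 / 2} \<and> \<not> ?\<psi> x < 1 \<or> x \<in> {x. 1 \<le> ?\<psi> x} \<and> ?\<psi> x < 1 \<longrightarrow>
        link k S (min 1 (2 - 2 * ?\<psi> x)) = approx k x"
    proof (intro allI impI)
      fix x assume "x \<in> {x. ?\<psi>' x \<le> 1 / 2} \<and> \<not> ?\<psi> x < 1 \<or> x \<in> {x. 1 \<le> ?\<psi> x} \<and> ?\<psi> x < 1"
      then have "?\<psi>' x \<le> 1 / 2" "?\<psi> x = 1" using \<psi>(2)[of x] by auto
      then show "link k S (min 1 (2 - 2 * ?\<psi> x)) = approx k x"
        using \<gamma>(2) approx_eq_centre[OF \<open>k \<le> n\<close> \<open>parent k S \<in> F k\<close>] by simp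
    qed
  qed
  moreover have "{x. ?\<psi>' x \<le> 1 / 2} \<union> {x. 1 \<le> ?\<psi> x} = UNIV"
    using \<psi>_parent_le_half by force
  ultimately show ?thesis by simp
qed

lemma approx_continuous: "k \<le> n \<Longrightarrow> continuous_on UNIV (approx k)"
proof (induction k)
  case (Suc k)
  then show ?case
    using \<psi>_discrete approx_continuous_piece by (simp add: approx.simps continuous_on_glue)
qed simp

lemma approx_step:
  assumes "1 \<le> k" "k < n"
  shows "dist (approx (Suc k) x) (approx k x) \<le> 1 / 2 ^ (k + 2)"
proof (cases "\<exists>S\<in>F (Suc k). \<psi> (Suc k) S x < 1")
  case True
  then obtain S where S: "S \<in> F (Suc k)" "\<psi> (Suc k) S x < 1" by blast
  let ?t = "min 1 (2 - 2 * \<psi> (Suc k) S x)"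
  have \<gamma>: "path (link k S)" "link k S 0 = p k (parent k S)"
    "diameter (path_image (link k S)) < 1 / 2 ^ (k + 2)"
    using link[OF assms(2) S(1)] assms(1) by (auto simp: pathstart_def)
  have "approx (Suc k) x = link k S ?t"
    using glue_eq[OF \<psi>_discrete S(1)] S(2) assms by (simp add: approx.simps)
  moreover have "approx k x = link k S 0"
    using approx_eq_centre[of k "parent k S"] \<psi>_parent_le_half[OF S(2)] parent[OF assms(2) S(1)]
      \<gamma>(2) assms by simp
  moreover have "?t \<in> {0..1}"
    using \<psi>_range[OF _ S(1), of x] assms by (auto simp: min_def)
  ultimately show ?thesis
    using dist_le_diameter_path_image[OF \<gamma>(1), of ?t 0] \<gamma>(3) by simp
next
  case False
  then show ?thesis by (simp add: approx.simps glue_eq_outside)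
qed

lemma approx_close:
  assumes "1 \<le> k" "k \<le> n"
  shows "dist (approx n x) (approx k x) \<le> 1 / 2 ^ (k + 1)"
proof -
  have "dist (approx n x) (approx k x) \<le> 2 * (1 / 4) / 2 ^ k - 2 * (1 / 4) / 2 ^ n"
    using assms approx_step by (intro dist_le_geometric_tail) (auto simp: power_add)
  also have "\<dots> \<le> 1 / 2 ^ (k + 1)"
    by simp
  finally show ?thesis .
qed

lemma approx_error:
  assumes k: "k \<in> {1..n}" and "S \<in> F k" "x \<in> S" and y: "dist y (p k S) < 1 / 2 ^ (k + 2)"
  shows "dist y (approx n x) < 1 / 2 ^ k"
proof -
  have "dist (approx n x) (p k S) \<le> 1 / 2 ^ (k + 1)"
    using approx_close[of k x] approx_eq_member[of k S x] assms by simp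
  moreover have "dist y (approx n x) \<le> dist y (p k S) + dist (approx n x) (p k S)"
    by (rule dist_triangle2)
  ultimately have "dist y (approx n x) < 1 / 2 ^ (k + 2) + 1 / 2 ^ (k + 1)"
    using y by linarith
  also have "\<dots> < 1 / 2 ^ k"
    by (simp add: field_simps)
  finally show ?thesis .
qed

end

lemma strictly_functionally_discrete_cutoffs:
  fixes F :: "nat \<Rightarrow> 'a::topological_space set set"
  assumes "\<forall>k\<le>n. strictly_functionally_discrete (F k)"
  obtains \<phi> :: "nat \<Rightarrow> 'a set \<Rightarrow> 'a \<Rightarrow> real" where
    "\<And>k A. k \<le> n \<Longrightarrow> A \<in> F k \<Longrightarrow> continuous_on UNIV (\<phi> k A)"
    "\<And>k A x. k \<le> n \<Longrightarrow> A \<in> F k \<Longrightarrow> \<phi> k A x \<in> {0..1}"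
    "\<And>k A x. k \<le> n \<Longrightarrow> A \<in> F k \<Longrightarrow> x \<in> A \<Longrightarrow> \<phi> k A x = 0"
    "\<And>k. k \<le> n \<Longrightarrow> discrete_family (F k) (\<lambda>A. \<phi> k A -` {0..<1})"
proof -
  have "\<forall>k\<in>{..n}. \<exists>\<phi> :: 'a set \<Rightarrow> 'a \<Rightarrow> real.
      (\<forall>A\<in>F k. continuous_on UNIV (\<phi> A) \<and> (\<forall>x. \<phi> A x \<in> {0..1}) \<and> A \<subseteq> \<phi> A -` {0}) \<and>
      discrete_family (F k) (\<lambda>A. \<phi> A -` {0..<1})"
    using assms unfolding strictly_functionally_discrete_def discrete_family_def
    by (simp only: Ball_def atMost_iff)
  then obtain \<phi> :: "nat \<Rightarrow> 'a set \<Rightarrow> 'a \<Rightarrow> real" where \<phi>: "\<forall>k\<in>{..n}.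
      (\<forall>A\<in>F k. continuous_on UNIV (\<phi> k A) \<and> (\<forall>x. \<phi> k A x \<in> {0..1}) \<and> A \<subseteq> \<phi> k A -` {0}) \<and>
      discrete_family (F k) (\<lambda>A. \<phi> k A -` {0..<1})"
    by (rule bchoice[THEN exE])
  show thesis
  proof (rule that)
    fix k A x assume "k \<le> n" "A \<in> F k"
    with \<phi> show "continuous_on UNIV (\<phi> k A)" "\<phi> k A x \<in> {0..1}" "x \<in> A \<Longrightarrow> \<phi> k A x = 0"
      by auto
  next
    fix k assume "k \<le> n"
    with \<phi> show "discrete_family (F k) (\<lambda>A. \<phi> k A -` {0..<1})" by simp
  qed
qed

theorem mainTheorem5:
  fixes f :: "'a::topological_space \<Rightarrow> 'b::metric_space"
    and n :: nat
    and F :: "nat \<Rightarrow> 'a set set"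
    and p :: "nat \<Rightarrow> 'a set \<Rightarrow> 'b"
  assumes n2: "n \<ge> 2"
    and sfd: "\<forall>k\<le>n. strictly_functionally_discrete (F k)"
    and A: "F 0 = {UNIV}"
    and B: "\<forall>k\<le>n. \<forall>S\<in>F k. \<exists>c < 1 / 2 ^ (k + 2). \<forall>x\<in>S. dist (f x) (p k S) \<le> c"
    and C: "\<forall>k<n. \<forall>S\<in>F (Suc k). \<exists>S'\<in>F k. S \<subseteq> S'"
    and D: "\<forall>S\<in>F 1. joined_by_arc (p 0 UNIV) (p 1 S)"
    and E: "\<forall>k\<in>{1..n-1}. \<forall>S\<in>F (Suc k). \<forall>S'\<in>F k. S \<subseteq> S' \<longrightarrow>
              joined_by_arc_diam_lt (p (Suc k) S) (p k S') (1 / 2 ^ (k + 2))"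
  shows "\<exists>g. continuous_on UNIV g \<and>
           (\<forall>k\<in>{1..n}. \<forall>x\<in>\<Union>(F k). dist (f x) (g x) < 1 / 2 ^ k)"
proof -
  obtain \<phi> :: "nat \<Rightarrow> 'a set \<Rightarrow> 'a \<Rightarrow> real" where
    "\<And>k A. k \<le> n \<Longrightarrow> A \<in> F k \<Longrightarrow> continuous_on UNIV (\<phi> k A)"
    "\<And>k A x. k \<le> n \<Longrightarrow> A \<in> F k \<Longrightarrow> \<phi> k A x \<in> {0..1}"
    "\<And>k A x. k \<le> n \<Longrightarrow> A \<in> F k \<Longrightarrow> x \<in> A \<Longrightarrow> \<phi> k A x = 0"
    "\<And>k. k \<le> n \<Longrightarrow> discrete_family (F k) (\<lambda>A. \<phi> k A -` {0..<1})"
    by (rule strictly_functionally_discrete_cutoffs[OF sfd]) blast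
  then interpret arc_approximation_scheme n F p \<phi>
    by unfold_locales (use A C D E in auto)
  have "dist (f x) (approx n x) < 1 / 2 ^ k" if k: "k \<in> {1..n}" and "S \<in> F k" "x \<in> S" for k S x
  proof -
    from k have "k \<le> n" by simp
    with B \<open>S \<in> F k\<close> obtain c where "c < 1 / 2 ^ (k + 2)" "\<forall>y\<in>S. dist (f y) (p k S) \<le> c"
      by blast
    then have "dist (f x) (p k S) < 1 / 2 ^ (k + 2)"
      using \<open>x \<in> S\<close> by fastforce
    then show ?thesis
      using approx_error k \<open>S \<in> F k\<close> \<open>x \<in> S\<close> by blast
  qed
  then show ?thesis
    using approx_continuous[of n] by (intro exI[of _ "approx n"]) blast
qed

end
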